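(* Let $d=1$. There exists a probability density $f_\natural\in\mathcal F_{\mathrm{Ent}}$ such that $\int_{\mathbb{R}}x^2f_\natural(x)\,\mathrm{d}x<\infty$ and $f_\natural\notin\mathcal F_{\mathrm{CSSA}}$.
   Context: $\log_+t=\max\{\log t,0\}$ for $t>0$, $\log_+0=0$. $\mathcal F_{\mathrm{Ent}}$ is the class of all continuous, strictly positive probability densities $f$ on $\mathbb{R}^d$ with $\int f\log_+f\,\mathrm{d}x<\infty$. Densities are w.r.t. Lebesgue measure; $F(A)=\int_Af\,\mathrm{d}x$; $\operatorname{supp}(f)=\{x:f(x)>0\}$. Comparison cubes are closed axis-aligned cubes (closed intervals when $d=1$); partition cubes may be half-open so as to be disjoint. "A cube of side $r$ with a vertex at $y$" means a closed axis-aligned cube of side length $r$ having $y$ as one of its vertices. A family of cubes of common side length is adjacent if they have pairwise disjoint interiors and the union of their closures is connected. Definition ($\mathcal F_{\mathrm{FSSA}}$): a density $f$ on $\mathbb{R}^d$ belongs to $\mathcal F_{\mathrm{FSSA}}$ if there exist, for each $m\ge1$, a partition $\operatorname{supp}(f)=A^{(m)}_0\sqcup A^{(m)}_1\sqcup\cdots\sqcup A^{(m)}_m$ in which $A^{(m)}_1,\dots,A^{(m)}_m$ are adjacent cubes of common side length $h_m>0$ and $A^{(m)}_0$ is the remainder, such that: (i) $f$ is continuous on $\operatorname{supp}(f)$ except on a set of $F$-measure zero; (ii) there exist $r>0$ and, for every $y\in\operatorname{supp}(f)$, a comparison cube $C(r,y)$ of side length $r$ containing $y$, such that $D_r(y)=\log\big(f(y)/\inf_{z\in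 C(r,y)}f(z)\big)$ is measurable on $\operatorname{supp}(f)$ and $\int_{\operatorname{supp}(f)}D_r\,\mathrm{d}F<\infty$; (iii) there exists $M\in\mathbb N$ such that for every $m\ge M$: (a) if $y\in A^{(m)}_0$ then $C(r,y)\cap A^{(m)}_0$ contains a cube of side $r/2$ with a vertex at $y$; (b) if $y\in\operatorname{supp}(f)\setminus A^{(m)}_0$ then $C(r,y)\cap(\operatorname{supp}(f)\setminus A^{(m)}_0)$ contains a cube of side $r/2$ with a vertex at $y$. Definition ($\mathcal F_{\mathrm{CSSA}}$): a density $f$ belongs to $\mathcal F_{\mathrm{CSSA}}$ if there exist a measurable partition $\operatorname{supp}(f)=\bigsqcup_{\ell\ge1}Y_\ell$ with $p_\ell=F(Y_\ell)$, and, for each $\ell$ with $p_\ell>0$, a scale $r_\ell>0$, comparison cubes $C_\ell(y)$ of side $r_\ell$ containing $y$ ($y\in Y_\ell$), and for every $m\ge1$ a partition $Y_\ell=A^{(m)}_{\ell,0}\sqcup\cdots\sqcup A^{(m)}_{\ell,m}$ with $A^{(m)}_{\ell,1},\dots,A^{(m)}_{\ell,m}$ adjacent cubes of common side $h_{\ell,m}>0$, such that for each $\ell$ with $p_\ell>0$ the normalized restriction $f_\ell=f\mathbf 1_{Y_\ell}/p_\ell$ satisfies the definition of $\mathcal F_{\mathrm{FSSA}}$ with these witnesses (scale $r_\ell$, cubes $C_\ell(y)$, these partitions), and, with $F_\ell$ the law of density $f_\ell$ and $D_\ell(y)=\log\big(f_\ell(y)/\inf_{z\in C_\ell(y)}f_\ell(z)\big)$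 for $y\in Y_\ell$, one has $\sum_{\ell:p_\ell>0}p_\ell\int_{Y_\ell}D_\ell\,\mathrm{d}F_\ell<\infty$ and $\sum_{\ell:p_\ell>0}p_\ell\log_+(1/r_\ell)<\infty$. *)

theory Defs
  imports "HOL-Analysis.Analysis"
begin

text \<open>Everything is specialised to dimension d = 1: densities are functions real \<Rightarrow> real,
cubes are intervals.\<close>

definition log_plus :: "real \<Rightarrow> real" where
  "log_plus t = (if t > 0 then max (ln t) 0 else 0)"

definition supp :: "(real \<Rightarrow> real) \<Rightarrow> real set" where
  "supp f = {x. f x > 0}"

definition is_density :: "(real \<Rightarrow> real) \<Rightarrow> bool" where
  "is_density f \<longleftrightarrow> (\<forall>x. 0 \<le> f x) \<and> f \<in> borel_measurable lebesgue
     \<and> (\<integral>\<^sup>+ x. ennreal (f x) \<partial>lebesgue) = 1"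

definition law :: "(real \<Rightarrow> real) \<Rightarrow> real measure" where
  "law f = density lebesgue (\<lambda>x. ennreal (f x))"

definition F_Ent :: "(real \<Rightarrow> real) set" where
  "F_Ent = {f. continuous_on UNIV f \<and> (\<forall>x. 0 < f x) \<and> is_density f
     \<and> (\<integral>\<^sup>+ x. ennreal (f x * log_plus (f x)) \<partial>lborel) < \<infinity>}"

definition closed_cube :: "real \<Rightarrow> real set \<Rightarrow> bool" where
  "closed_cube r S \<longleftrightarrow> (\<exists>a. S = {a..a+r})"

definition part_cube :: "real \<Rightarrow> real set \<Rightarrow> bool" where
  "part_cube h S \<longleftrightarrow> (\<exists>a. {a<..<a+h} \<subseteq> S \<and> S \<subseteq> {a..a+h})"

definition vertex_cube :: "real \<Rightarrow> real \<Rightarrow> real set \<Rightarrow> bool" where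
  "vertex_cube s y S \<longleftrightarrow> S = {y..y+s} \<or> S = {y-s..y}"

definition adjacent :: "real \<Rightarrow> nat \<Rightarrow> (nat \<Rightarrow> real set) \<Rightarrow> bool" where
  "adjacent h m B \<longleftrightarrow> (\<forall>i\<in>{1..m}. part_cube h (B i))
     \<and> (\<forall>i\<in>{1..m}. \<forall>j\<in>{1..m}. i \<noteq> j \<longrightarrow> interior (B i) \<inter> interior (B j) = {})
     \<and> connected (\<Union>i\<in>{1..m}. closure (B i))"

definition Dfun :: "(real \<Rightarrow> real) \<Rightarrow> (real \<Rightarrow> real set) \<Rightarrow> real \<Rightarrow> ennreal" where
  "Dfun f C y = (let i = Inf (f ` C y) in if 0 < i then ennreal (ln (f y / i)) else \<infinity>)"

text \<open>f satisfies the definition of F_FSSA with witnesses: scale r, comparison cubes C,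
  partitions A m 0, ..., A m m (m \<ge> 1) with common side h m.\<close>
definition fssa_with :: "(real \<Rightarrow> real) \<Rightarrow> real \<Rightarrow> (real \<Rightarrow> real set)
    \<Rightarrow> (nat \<Rightarrow> nat \<Rightarrow> real set) \<Rightarrow> (nat \<Rightarrow> real) \<Rightarrow> bool" where
  "fssa_with f r C A h \<longleftrightarrow>
     is_density f \<and>
     (\<forall>m\<ge>1. 0 < h m \<and> supp f = (\<Union>i\<le>m. A m i) \<and> disjoint_family_on (A m) {..m}
        \<and> adjacent (h m) m (A m)) \<and>
     \<comment> \<open>(i)\<close>
     (\<exists>N \<in> sets lebesgue. emeasure (law f) N = 0 \<and>
        (\<forall>x \<in> supp f - N. continuous (at x within supp f) f)) \<and>
     \<comment> \<open>(ii)\<close>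
     0 < r \<and>
     (\<forall>y\<in>supp f. closed_cube r (C y) \<and> y \<in> C y) \<and>
     (\<lambda>y. if y \<in> supp f then Dfun f C y else 0) \<in> borel_measurable lebesgue \<and>
     (\<integral>\<^sup>+ y. indicator (supp f) y * Dfun f C y \<partial>law f) < \<infinity> \<and>
     \<comment> \<open>(iii)\<close>
     (\<exists>M::nat. \<forall>m. M \<le> m \<and> 1 \<le> m \<longrightarrow>
        (\<forall>y\<in>A m 0. \<exists>S. vertex_cube (r/2) y S \<and> S \<subseteq> C y \<inter> A m 0) \<and>
        (\<forall>y\<in>supp f - A m 0. \<exists>S. vertex_cube (r/2) y S \<and> S \<subseteq> C y \<inter> (supp f - A m 0)))"

definition F_FSSA :: "(real \<Rightarrow> real) set" where
  "F_FSSA = {f. \<exists>r C A h. fssa_with f r C A h}"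

definition F_CSSA :: "(real \<Rightarrow> real) set" where
  "F_CSSA = {f. is_density f \<and>
     (\<exists>(Y :: nat \<Rightarrow> real set) (r :: nat \<Rightarrow> real) (C :: nat \<Rightarrow> real \<Rightarrow> real set)
        (A :: nat \<Rightarrow> nat \<Rightarrow> nat \<Rightarrow> real set) (h :: nat \<Rightarrow> nat \<Rightarrow> real).
       let p = (\<lambda>l. measure (law f) (Y l));
           fl = (\<lambda>l x. indicator (Y l) x * f x / p l)
       in (\<forall>l. Y l \<in> sets lebesgue) \<and> disjoint_family Y \<and> (\<Union>l. Y l) = supp f \<and>
          (\<forall>l. 0 < p l \<longrightarrow> fssa_with (fl l) (r l) (C l) (A l) (h l)) \<and>
          (\<Sum>l. if 0 < p l then ennreal (p l) *
                (\<integral>\<^sup>+ y. indicator (Y l) y * Dfun (fl l) (C l) y \<partial>law (fl l)) else 0) < \<infinity> \<and>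
          (\<Sum>l. if 0 < p l then ennreal (p l * log_plus (1 / r l)) else 0) < \<infinity>)}"

end

theory Submission
  imports Defs "HOL-Probability.Distributions"
begin

(* The witness is a Gaussian density with dips. On [k, k+1], k >= 1, it is pushed down to
   phi(x) exp(-E(x)) at the points of a grid of mesh 1/N_k with ln N_k >= 3 exp((k+1)^2), and it
   is at least phi(x) on the "plateau" away from the grid, a set of infinite Lebesgue measure.
   Let y be a plateau point in [k, k+1] and C a comparison interval of side r containing y.
   Either r >= 1/N_k, so C contains a grid point and D(y) >= ln (f(y) / f(grid point)) >= 1/phi(y);
   or r < 1/N_k and log_+(1/r) >= ln N_k >= 1/phi(y). Hence any decomposition witnessing
   membership in F_CSSA would make the integral of f/phi over the plateau finite, whereas
   f/phi is bounded below there by a positive constant. Below, phi is std_normal_density,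
   E is dip_depth, N_k is grid_size k and f is f_nat. *)

lemma log_plus_nonneg: "0 \<le> log_plus t"
  unfolding log_plus_def by auto

lemma log_plus_le_self: "0 \<le> t \<Longrightarrow> log_plus t \<le> t"
  unfolding log_plus_def using ln_le_minus_one[of t] by auto

lemma ln_le_log_plus: "0 < t \<Longrightarrow> ln t \<le> log_plus t"
  unfolding log_plus_def by simp

lemma nn_integral_log_plus_bounded:
  assumes [measurable]: "f \<in> borel_measurable borel"
    and "\<And>x. 0 \<le> f x" "\<And>x. f x \<le> B" "(\<integral>\<^sup>+ x. ennreal (f x) \<partial>lborel) = 1"
  shows "(\<integral>\<^sup>+ x. ennreal (f x * log_plus (f x)) \<partial>lborel) < \<infinity>"
proof -
  have "(\<integral>\<^sup>+ x. ennreal (f x * log_plus (f x)) \<partial>lborel) \<le> (\<integral>\<^sup>+ x. ennreal B * ennreal (f x) \<partial>lborel)"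
  proof (rule nn_integral_mono)
    fix x
    have "f x * log_plus (f x) \<le> B * f x"
      using assms(2,3)[of x] log_plus_le_self[of "f x"] log_plus_nonneg[of "f x"]
      by (metis mult_mono order.trans)
    then have "ennreal (f x * log_plus (f x)) \<le> ennreal (B * f x)" by (rule ennreal_leI)
    also have "\<dots> = ennreal B * ennreal (f x)" using assms(2) by (rule ennreal_mult'')
    finally show "ennreal (f x * log_plus (f x)) \<le> ennreal B * ennreal (f x)" .
  qed
  also have "\<dots> = ennreal B" using assms(4) by (simp add: nn_integral_cmult)
  finally show ?thesis by (simp add: le_less_trans)
qed

lemma normalized_positive_integrable:
  fixes h :: "real \<Rightarrow> real"
  assumes "integrable lborel h" "\<And>x. 0 < h x"
  shows "0 < integral\<^sup>L lborel h" "(\<integral>\<^sup>+ x. ennreal (h x / integral\<^sup>L lborel h) \<partial>lborel) = 1"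
proof -
  have "0 \<le> integral\<^sup>L lborel h" using assms(2) by (simp add: less_imp_le)
  moreover have "integral\<^sup>L lborel h \<noteq> 0"
  proof
    assume "integral\<^sup>L lborel h = 0"
    then have "AE x in lborel. h x = 0"
      using integral_nonneg_eq_0_iff_AE[OF assms(1)] assms(2) by (simp add: less_imp_le)
    then have "AE x in (lborel :: real measure). False"
      by (rule AE_mp) (use assms(2) in \<open>simp add: less_le\<close>)
    then show False by (simp flip: trivial_limit_def add: ae_filter_eq_bot_iff)
  qed
  ultimately show pos: "0 < integral\<^sup>L lborel h" by simp
  have "(\<integral>\<^sup>+ x. ennreal (h x / integral\<^sup>L lborel h) \<partial>lborel)
      = ennreal (integral\<^sup>L lborel (\<lambda>x. h x / integral\<^sup>L lborel h))"
    using assms pos by (intro nn_integral_eq_integral) (auto simp: less_imp_le)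
  also have "\<dots> = 1" using pos by simp
  finally show "(\<integral>\<^sup>+ x. ennreal (h x / integral\<^sup>L lborel h) \<partial>lborel) = 1" .
qed

section \<open>Local cost of decompositions\<close>

(* g stands for the normalised restriction of f to one piece of a decomposition: where it
   vanishes inside C y the infimum is 0 and Dfun is infinite. *)
lemma Dfun_ge_ln_ratio:
  assumes "0 < p" "0 < f y" "z \<in> C y"
    and g_nonneg: "\<And>x. 0 \<le> g x" and g_le: "\<And>x. g x \<le> f x / p" and g_y: "g y = f y / p"
  shows "ennreal (ln (f y / f z)) \<le> Dfun g C y"
proof -
  define i where "i = Inf (g ` C y)"
  show ?thesis
  proof (cases "0 < i")
    case False
    then show ?thesis by (simp add: Dfun_def Let_def flip: i_def)
  next
    case True
    have "i \<le> g z"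
      unfolding i_def by (rule cInf_lower) (use assms in \<open>auto intro!: bdd_belowI[where m=0]\<close>)
    then have i_le: "i \<le> f z / p" using g_le[of z] by linarith
    with True have "0 < f z / p" by linarith
    with \<open>0 < p\<close> have "0 < f z" by (simp add: zero_less_divide_iff)
    have "f y / f z = (f y / p) / (f z / p)" using \<open>0 < p\<close> by simp
    also have "\<dots> \<le> g y / i"
      unfolding g_y using True i_le \<open>0 < f y\<close> \<open>0 < f z\<close> \<open>0 < p\<close>
      by (intro divide_left_mono) auto
    finally have "ln (f y / f z) \<le> ln (g y / i)"
      using \<open>0 < f y\<close> \<open>0 < f z\<close> by (intro ln_mono) auto
    then show ?thesis using True by (simp add: Dfun_def Let_def ennreal_leI flip: i_def)
  qed
qed

lemma ennreal_measure_law: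
  assumes "is_density f" "Y \<in> sets lebesgue"
  shows "ennreal (measure (law f) Y) = (\<integral>\<^sup>+ x. ennreal (f x) * indicator Y x \<partial>lebesgue)"
proof -
  have [measurable]: "f \<in> borel_measurable lebesgue" using assms(1) by (simp add: is_density_def)
  have law_Y: "emeasure (law f) Y = (\<integral>\<^sup>+ x. ennreal (f x) * indicator Y x \<partial>lebesgue)"
    unfolding law_def by (rule emeasure_density) (use assms(2) in simp_all)
  have "(\<integral>\<^sup>+ x. ennreal (f x) * indicator Y x \<partial>lebesgue) \<le> (\<integral>\<^sup>+ x. ennreal (f x) \<partial>lebesgue)"
    by (rule nn_integral_mono) (simp split: split_indicator)
  also have "\<dots> = 1" using assms(1) by (simp add: is_density_def)
  finally have "emeasure (law f) Y \<noteq> \<infinity>" using law_Y by (auto simp: top_unique)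
  then show ?thesis using law_Y emeasure_eq_ennreal_measure[of "law f" Y] by simp
qed

definition local_cost_dominates :: "(real \<Rightarrow> real) \<Rightarrow> (real \<Rightarrow> real) \<Rightarrow> bool" where
  "local_cost_dominates f \<Phi> \<longleftrightarrow> (\<forall>y a r. 0 < r \<longrightarrow> 0 < f y \<longrightarrow> a \<le> y \<longrightarrow> y \<le> a + r \<longrightarrow>
     \<Phi> y \<le> log_plus (1 / r) \<or> (\<exists>z\<in>{a..a+r}. \<Phi> y \<le> ln (f y / f z)))"

lemma Dfun_add_log_plus_ge:
  assumes "local_cost_dominates f \<Phi>" "0 < r" "closed_cube r (C y)" "y \<in> C y" "0 < f y"
    and "0 < p" "\<And>x. 0 \<le> g x" "\<And>x. g x \<le> f x / p" "g y = f y / p"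
  shows "ennreal (\<Phi> y) \<le> Dfun g C y + ennreal (log_plus (1 / r))"
proof -
  obtain a where "C y = {a..a+r}" using assms(3) unfolding closed_cube_def by blast
  with assms(1,2,4,5) consider "\<Phi> y \<le> log_plus (1 / r)" | z where "z \<in> C y" "\<Phi> y \<le> ln (f y / f z)"
    unfolding local_cost_dominates_def by (metis atLeastAtMost_iff)
  then show ?thesis
  proof cases
    case 1
    then show ?thesis by (simp add: add_increasing ennreal_leI)
  next
    case 2
    have "ennreal (\<Phi> y) \<le> ennreal (ln (f y / f z))" using 2(2) by (rule ennreal_leI)
    also have "\<dots> \<le> Dfun g C y"
      using assms(6,5) 2(1) assms(7-9) by (rule Dfun_ge_ln_ratio)
    finally show ?thesis by (simp add: add_increasing2)
  qed
qed

lemma nn_integral_law_restriction: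
  assumes f: "is_density f" and [measurable]: "Y \<in> sets lebesgue" "D \<in> borel_measurable lebesgue"
    and "0 < p"
  shows "ennreal p * (\<integral>\<^sup>+ y. D y \<partial>law (\<lambda>x. indicator Y x * f x / p))
    = (\<integral>\<^sup>+ y. ennreal (f y) * indicator Y y * D y \<partial>lebesgue)"
proof -
  have [measurable]: "f \<in> borel_measurable lebesgue" using f by (simp add: is_density_def)
  have "ennreal p * (\<integral>\<^sup>+ y. D y \<partial>law (\<lambda>x. indicator Y x * f x / p))
      = ennreal p * (\<integral>\<^sup>+ y. ennreal (indicator Y y * f y / p) * D y \<partial>lebesgue)"
    unfolding law_def by (subst nn_integral_density) auto
  also have "\<dots> = (\<integral>\<^sup>+ y. ennreal p * (ennreal (indicator Y y * f y / p) * D y) \<partial>lebesgue)"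
    by (rule nn_integral_cmult[symmetric]) auto
  also have "\<dots> = (\<integral>\<^sup>+ y. ennreal (f y) * indicator Y y * D y \<partial>lebesgue)"
    using \<open>0 < p\<close> f
    by (intro nn_integral_cong)
      (auto simp: is_density_def ennreal_mult'[symmetric] mult.assoc[symmetric] split: split_indicator)
  finally show ?thesis .
qed

lemma fssa_piece_cost_bound:
  fixes f \<Phi> :: "real \<Rightarrow> real" and Y :: "real set" and p :: real
  defines "g \<equiv> \<lambda>x. indicator Y x * f x / p"
  assumes f: "is_density f" and Y: "Y \<in> sets lebesgue" "Y \<subseteq> supp f"
    and p: "p = measure (law f) Y" "0 < p"
    and fssa: "fssa_with g r C A h"
    and [measurable]: "\<Phi> \<in> borel_measurable lebesgue" and cost: "local_cost_dominates f \<Phi>"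
  shows "(\<integral>\<^sup>+ y. ennreal (f y * \<Phi> y) * indicator Y y \<partial>lebesgue)
     \<le> ennreal p * (\<integral>\<^sup>+ y. indicator Y y * Dfun g C y \<partial>law g) + ennreal (p * log_plus (1 / r))"
proof -
  have f_nonneg: "0 \<le> f x" for x using f by (simp add: is_density_def)
  have [measurable]: "f \<in> borel_measurable lebesgue" "Y \<in> sets lebesgue"
    using f Y by (simp_all add: is_density_def)
  have "supp g = Y"
    using Y(2) \<open>0 < p\<close> by (auto simp: supp_def g_def split: split_indicator)
  then have "0 < r" and cube: "\<And>y. y \<in> Y \<Longrightarrow> closed_cube r (C y) \<and> y \<in> C y"
    and D_meas: "(\<lambda>y. if y \<in> Y then Dfun g C y else 0) \<in> borel_measurable lebesgue"
    using fssa unfolding fssa_with_def by metis+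
  define D where "D y = indicator Y y * Dfun g C y" for y
  have "D = (\<lambda>y. if y \<in> Y then Dfun g C y else 0)"
    by (simp add: D_def fun_eq_iff)
  with D_meas have D_measurable[measurable]: "D \<in> borel_measurable lebesgue" by simp
  define L where "L = log_plus (1 / r)"
  have g_nonneg: "0 \<le> g x" and g_le: "g x \<le> f x / p" for x
    using f_nonneg[of x] \<open>0 < p\<close> by (auto simp: g_def split: split_indicator)
  have "ennreal (\<Phi> y) \<le> D y + ennreal L" if "y \<in> Y" for y
  proof -
    have "0 < f y" using that Y(2) by (auto simp: supp_def)
    moreover have "g y = f y / p" using that by (simp add: g_def)
    ultimately show ?thesis
      using Dfun_add_log_plus_ge[OF cost \<open>0 < r\<close> _ _ _ \<open>0 < p\<close> g_nonneg g_le] cube[OF that] that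
      by (simp add: D_def L_def)
  qed
  then have "(\<integral>\<^sup>+ y. ennreal (f y * \<Phi> y) * indicator Y y \<partial>lebesgue)
      \<le> (\<integral>\<^sup>+ y. ennreal (f y) * indicator Y y * D y
            + ennreal (f y) * indicator Y y * ennreal L \<partial>lebesgue)"
    using f_nonneg
    by (intro nn_integral_mono)
      (auto simp: ennreal_mult' distrib_left[symmetric] intro!: mult_left_mono split: split_indicator)
  also have "\<dots> = (\<integral>\<^sup>+ y. ennreal (f y) * indicator Y y * D y \<partial>lebesgue)
      + (\<integral>\<^sup>+ y. ennreal (f y) * indicator Y y \<partial>lebesgue) * ennreal L"
    by (subst nn_integral_add) (auto simp: nn_integral_multc)
  also have "\<dots> = ennreal p * (\<integral>\<^sup>+ y. D y \<partial>law g) + ennreal p * ennreal L"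
    unfolding g_def nn_integral_law_restriction[OF f Y(1) D_measurable \<open>0 < p\<close>, symmetric]
      ennreal_measure_law[OF f Y(1), folded p(1), symmetric] ..
  also have "\<dots> = ennreal p * (\<integral>\<^sup>+ y. D y \<partial>law g) + ennreal (p * L)"
    using \<open>0 < p\<close> by (simp add: L_def ennreal_mult log_plus_nonneg)
  finally show ?thesis unfolding D_def L_def .
qed

lemma nn_integral_disjoint_family:
  assumes "disjoint_family Y" "\<And>l. Y l \<in> sets M" "H \<in> borel_measurable M"
  shows "(\<Sum>l. \<integral>\<^sup>+ y. H y * indicator (Y l) y \<partial>M) = (\<integral>\<^sup>+ y. H y * indicator (\<Union>l. Y l) y \<partial>M)"
proof -
  have "(\<Sum>l. \<integral>\<^sup>+ y. H y * indicator (Y l) y \<partial>M) = (\<integral>\<^sup>+ y. (\<Sum>l. H y * indicator (Y l) y) \<partial>M)"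
    using assms(2,3) by (intro nn_integral_suminf[symmetric]) auto
  also have "\<dots> = (\<integral>\<^sup>+ y. H y * indicator (\<Union>l. Y l) y \<partial>M)"
    by (simp add: suminf_indicator[OF assms(1)])
  finally show ?thesis .
qed

lemma nn_integral_law_null:
  assumes f: "is_density f" and [measurable]: "Y \<in> sets lebesgue" and "measure (law f) Y = 0"
  shows "(\<integral>\<^sup>+ y. ennreal (f y * \<Phi> y) * indicator Y y \<partial>lebesgue) = 0"
proof -
  have f_nonneg: "0 \<le> f x" for x using f by (simp add: is_density_def)
  have [measurable]: "f \<in> borel_measurable lebesgue" using f by (simp add: is_density_def)
  have "(\<integral>\<^sup>+ x. ennreal (f x) * indicator Y x \<partial>lebesgue) = 0"
    using ennreal_measure_law[OF f, of Y] assms(3) by simp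
  then have "AE x in lebesgue. ennreal (f x) * indicator Y x = 0"
    by (simp add: nn_integral_0_iff_AE)
  then have "AE x in lebesgue. ennreal (f x * \<Phi> x) * indicator Y x = 0"
    by eventually_elim (auto simp: ennreal_mult' f_nonneg split: split_indicator)
  from nn_integral_cong_AE[OF this] show ?thesis by simp
qed

lemma F_CSSA_cost_integrable:
  fixes f \<Phi> :: "real \<Rightarrow> real"
  assumes "f \<in> F_CSSA" and [measurable]: "\<Phi> \<in> borel_measurable lebesgue"
    and cost: "local_cost_dominates f \<Phi>"
  shows "(\<integral>\<^sup>+ y. ennreal (f y * \<Phi> y) \<partial>lebesgue) < \<infinity>"
proof -
  obtain Y r C A h where H:
    "let p = (\<lambda>l. measure (law f) (Y l));
         fl = (\<lambda>l x. indicator (Y l) x * f x / p l)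
       in (\<forall>l. Y l \<in> sets lebesgue) \<and> disjoint_family Y \<and> (\<Union>l. Y l) = supp f \<and>
          (\<forall>l. 0 < p l \<longrightarrow> fssa_with (fl l) (r l) (C l) (A l) (h l)) \<and>
          (\<Sum>l. if 0 < p l then ennreal (p l) *
                (\<integral>\<^sup>+ y. indicator (Y l) y * Dfun (fl l) (C l) y \<partial>law (fl l)) else 0) < \<infinity> \<and>
          (\<Sum>l. if 0 < p l then ennreal (p l * log_plus (1 / r l)) else 0) < \<infinity>"
    and f: "is_density f"
    using assms(1) unfolding F_CSSA_def by blast
  define p where "p l = measure (law f) (Y l)" for l
  define fl where "fl l x = indicator (Y l) x * f x / p l" for l x
  define a where "a l = (if 0 < p l then ennreal (p l) *
      (\<integral>\<^sup>+ y. indicator (Y l) y * Dfun (fl l) (C l) y \<partial>law (fl l)) else 0)" for l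
  define b where "b l = (if 0 < p l then ennreal (p l * log_plus (1 / r l)) else 0)" for l
  have Y[measurable]: "\<And>l. Y l \<in> sets lebesgue" and "disjoint_family Y" "(\<Union>l. Y l) = supp f"
    and fssa: "\<And>l. 0 < p l \<Longrightarrow> fssa_with (fl l) (r l) (C l) (A l) (h l)"
    and "suminf a < \<infinity>" "suminf b < \<infinity>"
    using H unfolding Let_def p_def[abs_def] fl_def[abs_def] a_def[abs_def] b_def[abs_def] by blast+
  have f_nonneg: "0 \<le> f x" for x using f by (simp add: is_density_def)
  have [measurable]: "f \<in> borel_measurable lebesgue" using f by (simp add: is_density_def)
  have piece: "(\<integral>\<^sup>+ y. ennreal (f y * \<Phi> y) * indicator (Y l) y \<partial>lebesgue) \<le> a l + b l" for l
  proof (cases "0 < p l")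
    case True
    then show ?thesis
      using fssa_piece_cost_bound[OF f Y _ p_def True fssa[OF True, unfolded fl_def] _ cost]
        \<open>(\<Union>l. Y l) = supp f\<close>
      by (auto simp: a_def b_def fl_def[abs_def])
  next
    case False
    then have "p l = 0" using measure_nonneg[of "law f" "Y l"] unfolding p_def by linarith
    then show ?thesis using nn_integral_law_null[OF f Y] by (simp add: p_def)
  qed
  have "(\<integral>\<^sup>+ y. ennreal (f y * \<Phi> y) \<partial>lebesgue)
      = (\<integral>\<^sup>+ y. ennreal (f y * \<Phi> y) * indicator (\<Union>l. Y l) y \<partial>lebesgue)"
  proof (intro nn_integral_cong)
    fix y
    have "f y = 0" if "y \<notin> supp f" using that f_nonneg[of y] by (simp add: supp_def)
    then show "ennreal (f y * \<Phi> y) = ennreal (f y * \<Phi> y) * indicator (\<Union>l. Y l) y"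
      using \<open>(\<Union>l. Y l) = supp f\<close> by (simp split: split_indicator)
  qed
  also have "\<dots> = (\<Sum>l. \<integral>\<^sup>+ y. ennreal (f y * \<Phi> y) * indicator (Y l) y \<partial>lebesgue)"
    using \<open>disjoint_family Y\<close> by (rule nn_integral_disjoint_family[symmetric]) auto
  also have "\<dots> \<le> (\<Sum>l. a l + b l)"
    using piece by (intro suminf_le) auto
  also have "\<dots> = suminf a + suminf b"
    by (rule suminf_add[symmetric]) auto
  also have "\<dots> < \<infinity>"
    using \<open>suminf a < \<infinity>\<close> \<open>suminf b < \<infinity>\<close> by simp
  finally show ?thesis .
qed

section \<open>A Gaussian density with deep dips on fine grids\<close>

(* ln (grid_size k) >= 3 exp ((k+1)^2) >= 1 / phi on [k, k+1], so comparison intervals finer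
   than the grid already pay log_plus (1/r) >= 1 / phi. *)
definition grid_size :: "nat \<Rightarrow> nat" where
  "grid_size k = nat \<lceil>exp (3 * exp ((real k + 1)\<^sup>2))\<rceil>"

definition grid :: "real set" where
  "grid = {real k + real i / real (grid_size k) | k i. 1 \<le> k \<and> i \<le> grid_size k}"

(* The term |x| + 1 absorbs the Gaussian ratio between y and a grid point g >= y - 1. *)
definition dip_depth :: "real \<Rightarrow> real" where
  "dip_depth x = 3 * exp ((x + 1)\<^sup>2) + \<bar>x\<bar> + 1"

(* Steep enough that the dips cover at most half of each [k, k+1]. *)
definition dip_slope :: "real \<Rightarrow> real" where
  "dip_slope x = 4 * exp (3 * exp ((x + 1)\<^sup>2)) + 8"

definition dipped :: "real \<Rightarrow> real" where
  "dipped x = std_normal_density x * (exp (- dip_depth x) + min 1 (dip_slope x * infdist x grid))"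

definition plateau :: "real set" where
  "plateau = {y. 1 \<le> y \<and> 1 \<le> dip_slope y * infdist y grid}"

lemma grid_size_bounds:
  "exp (3 * exp ((real k + 1)\<^sup>2)) \<le> real (grid_size k)"
  "real (grid_size k) \<le> exp (3 * exp ((real k + 1)\<^sup>2)) + 1"
proof -
  have "real (grid_size k) = of_int \<lceil>exp (3 * exp ((real k + 1)\<^sup>2))\<rceil>"
    unfolding grid_size_def by (simp add: order.strict_implies_order)
  then show "exp (3 * exp ((real k + 1)\<^sup>2)) \<le> real (grid_size k)"
    and "real (grid_size k) \<le> exp (3 * exp ((real k + 1)\<^sup>2)) + 1"
    using le_of_int_ceiling of_int_ceiling_le_add_one by simp_all
qed

lemma grid_size_pos: "0 < real (grid_size k)"
  using less_le_trans[OF exp_gt_zero grid_size_bounds(1)] .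

lemma grid_point_in_interval:
  assumes "0 < N" "1 / real N \<le> r" "a \<le> y" "y \<le> a + r" "0 \<le> y" "y \<le> 1"
  shows "\<exists>i\<le>N. a \<le> real i / real N \<and> real i / real N \<le> a + r"
proof (intro exI conjI)
  define i where "i = nat \<lceil>a * N\<rceil>"
  have "a * N \<le> N" using assms by simp
  then show "i \<le> N" unfolding i_def by (simp add: nat_le_iff ceiling_le_iff)
  have "a * N \<le> real i" unfolding i_def by linarith
  then show "a \<le> real i / real N" using assms(1) by (simp add: field_simps)
  show "real i / real N \<le> a + r"
  proof (cases "a \<le> 0")
    case True
    then have "i = 0" unfolding i_def by (simp add: mult_nonpos_nonneg)
    then show ?thesis using assms by simp
  next
    case False
    with assms(1) have "real i = of_int \<lceil>a * N\<rceil>" unfolding i_def by simp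
    then have "real i < a * N + 1" using ceiling_correct[of "a * N"] by linarith
    then have "real i / real N < a + 1 / real N" using assms(1) by (simp add: field_simps)
    then show ?thesis using assms(2) by linarith
  qed
qed

lemma grid_meets_interval:
  assumes "1 \<le> k" "real k \<le> y" "y \<le> real k + 1" "a \<le> y" "y \<le> a + r" "1 / real (grid_size k) \<le> r"
  shows "\<exists>g\<in>grid. a \<le> g \<and> g \<le> a + r \<and> real k \<le> g"
proof -
  have "0 < grid_size k" using grid_size_pos[of k] by simp
  from grid_point_in_interval[OF this assms(6), of "a - k" "y - k"] assms
  obtain i where "i \<le> grid_size k" "a - k \<le> real i / real (grid_size k)"
    "real i / real (grid_size k) \<le> a - k + r"
    by auto
  moreover from this have "real k + real i / real (grid_size k) \<in> grid"
    unfolding grid_def using assms(1) by blast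
  ultimately show ?thesis by (intro bexI[of _ "real k + real i / real (grid_size k)"]) auto
qed

lemma std_normal_density_eq: "std_normal_density x = exp (- (x\<^sup>2 / 2)) / sqrt (2 * pi)"
  by (simp add: normal_density_def)

lemma std_normal_density_pos: "0 < std_normal_density x"
  by (simp add: normal_density_pos)

lemma std_normal_density_le: "std_normal_density x \<le> 1 / 2"
proof -
  have "2 \<le> sqrt (2 * pi)"
    using real_sqrt_le_mono[of 4 "2 * pi"] pi_gt3 by simp
  moreover have "exp (- (x\<^sup>2 / 2)) \<le> 1" by simp
  ultimately show ?thesis
    unfolding std_normal_density_eq by (intro frac_le) auto
qed

lemma inverse_std_normal_density_le: "1 / std_normal_density x \<le> 3 * exp (x\<^sup>2)"
proof -
  have "sqrt (2 * pi) \<le> 3"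
    using real_sqrt_le_mono[of "2 * pi" 9] pi_less_4 by simp
  moreover have "exp (x\<^sup>2 / 2) \<le> exp (x\<^sup>2)" by simp
  moreover have "1 / std_normal_density x = sqrt (2 * pi) * exp (x\<^sup>2 / 2)"
    unfolding std_normal_density_eq by (simp add: exp_minus field_simps)
  ultimately show ?thesis by (simp add: mult_mono)
qed

lemma std_normal_density_ratio:
  "std_normal_density y / std_normal_density g = exp ((g\<^sup>2 - y\<^sup>2) / 2)"
  unfolding std_normal_density_eq by (simp add: exp_diff[symmetric] diff_divide_distrib)

lemma continuous_dipped: "continuous_on UNIV dipped"
  unfolding dipped_def std_normal_density_eq dip_depth_def dip_slope_def
  by (intro continuous_intros) auto

lemma dipped_pos: "0 < dipped x"
  unfolding dipped_def using std_normal_density_pos[of x] infdist_nonneg[of x grid]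
  by (intro mult_pos_pos) (auto intro!: add_pos_nonneg simp: dip_slope_def)

lemma dipped_le: "dipped x \<le> 2 * std_normal_density x"
proof -
  have "0 \<le> dip_depth x" unfolding dip_depth_def by (intro add_nonneg_nonneg) auto
  then have "exp (- dip_depth x) \<le> 1" by simp
  then have "exp (- dip_depth x) + min 1 (dip_slope x * infdist x grid) \<le> 2"
    using min.cobounded1[of 1 "dip_slope x * infdist x grid"] by linarith
  then show ?thesis
    unfolding dipped_def using std_normal_density_pos[of x]
    by (metis mult.commute mult_le_cancel_left_pos)
qed

lemma dipped_grid: "g \<in> grid \<Longrightarrow> dipped g = std_normal_density g * exp (- dip_depth g)"
  unfolding dipped_def by simp

lemma dipped_plateau: "y \<in> plateau \<Longrightarrow> std_normal_density y \<le> dipped y"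
  unfolding dipped_def plateau_def using std_normal_density_pos[of y]
  by (auto simp: mult_le_cancel_left1)

lemma dipped_borel[measurable]: "dipped \<in> borel_measurable borel"
  using continuous_dipped by (rule borel_measurable_continuous_onI)

lemma integrable_dipped: "integrable lborel dipped"
proof (rule Bochner_Integration.integrable_bound)
  show "integrable lborel (\<lambda>x. 2 * std_normal_density x)"
    using integrable_std_normal_moment[of 0] by simp
  show "AE x in lborel. norm (dipped x) \<le> norm (2 * std_normal_density x)"
    using dipped_le dipped_pos std_normal_density_pos by (simp add: less_imp_le)
qed simp

definition f_nat :: "real \<Rightarrow> real" where
  "f_nat x = dipped x / integral\<^sup>L lborel dipped"

lemma integral_dipped_pos: "0 < integral\<^sup>L lborel dipped"
  using normalized_positive_integrable(1)[OF integrable_dipped dipped_pos] .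

lemma f_nat_pos: "0 < f_nat x"
  unfolding f_nat_def using dipped_pos integral_dipped_pos by simp

lemma f_nat_borel[measurable]: "f_nat \<in> borel_measurable borel"
  unfolding f_nat_def[abs_def] by simp

lemma nn_integral_f_nat: "(\<integral>\<^sup>+ x. ennreal (f_nat x) \<partial>lborel) = 1"
  unfolding f_nat_def using normalized_positive_integrable(2)[OF integrable_dipped dipped_pos] .

lemma f_nat_in_F_Ent: "f_nat \<in> F_Ent"
proof -
  have "continuous_on UNIV f_nat"
    unfolding f_nat_def[abs_def] using integral_dipped_pos
    by (intro continuous_intros continuous_dipped) auto
  moreover have "is_density f_nat"
    unfolding is_density_def using f_nat_pos
    by (auto simp: nn_integral_completion nn_integral_f_nat less_imp_le intro: measurable_completion)
  moreover have "f_nat x \<le> 1 / integral\<^sup>L lborel dipped" for x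
    unfolding f_nat_def using dipped_le[of x] std_normal_density_le[of x] integral_dipped_pos
    by (simp add: divide_right_mono)
  then have "(\<integral>\<^sup>+ x. ennreal (f_nat x * log_plus (f_nat x)) \<partial>lborel) < \<infinity>"
    using f_nat_pos nn_integral_f_nat by (intro nn_integral_log_plus_bounded) (auto simp: less_imp_le)
  ultimately show ?thesis unfolding F_Ent_def using f_nat_pos by blast
qed

lemma f_nat_second_moment: "(\<integral>\<^sup>+ x. ennreal (x\<^sup>2 * f_nat x) \<partial>lborel) < \<infinity>"
proof -
  define c where "c = 2 / integral\<^sup>L lborel dipped"
  have "(\<integral>\<^sup>+ x. ennreal (x\<^sup>2 * f_nat x) \<partial>lborel)
      \<le> (\<integral>\<^sup>+ x. ennreal (c * (std_normal_density x * x ^ 2)) \<partial>lborel)"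
  proof (rule nn_integral_mono)
    fix x
    have "x\<^sup>2 * f_nat x \<le> x\<^sup>2 * (2 * std_normal_density x / integral\<^sup>L lborel dipped)"
      unfolding f_nat_def using dipped_le[of x] integral_dipped_pos
      by (intro mult_left_mono divide_right_mono) auto
    then show "ennreal (x\<^sup>2 * f_nat x) \<le> ennreal (c * (std_normal_density x * x ^ 2))"
      unfolding c_def by (intro ennreal_leI) (simp add: field_simps)
  qed
  also have "\<dots> = ennreal (integral\<^sup>L lborel (\<lambda>x. c * (std_normal_density x * x ^ 2)))"
    using integral_dipped_pos std_normal_density_pos
    by (intro nn_integral_eq_integral integrable_mult_right integrable_std_normal_moment AE_I2)
      (simp add: c_def less_imp_le)
  finally show ?thesis by (simp add: le_less_trans)
qed

lemma inverse_std_normal_le_ln_dip_ratio: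
  assumes "g \<in> grid" "y \<in> plateau" "y \<le> g + 1"
  shows "1 / std_normal_density y \<le> ln (dipped y / dipped g)"
proof -
  have "1 \<le> y" using assms(2) by (simp add: plateau_def)
  then have "0 \<le> g" "y\<^sup>2 \<le> (g + 1)\<^sup>2" using assms(3) by (auto intro: power_mono)
  have "1 / std_normal_density y \<le> 3 * exp ((g + 1)\<^sup>2)"
    using inverse_std_normal_density_le[of y] exp_le_cancel_iff[of "y\<^sup>2" "(g + 1)\<^sup>2"]
      \<open>y\<^sup>2 \<le> (g + 1)\<^sup>2\<close> by linarith
  also have "\<dots> \<le> (g\<^sup>2 - y\<^sup>2) / 2 + dip_depth g"
    using \<open>0 \<le> g\<close> \<open>y\<^sup>2 \<le> (g + 1)\<^sup>2\<close>
    by (simp add: dip_depth_def power2_eq_square algebra_simps) (simp add: field_simps)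
  also have "\<dots> = ln (std_normal_density y / (std_normal_density g * exp (- dip_depth g)))"
    using std_normal_density_pos[of g] std_normal_density_ratio[of y g]
    by (simp add: exp_minus field_simps flip: exp_add)
  also have "\<dots> \<le> ln (dipped y / dipped g)"
    using dipped_plateau[OF assms(2)] std_normal_density_pos[of y] std_normal_density_pos[of g]
    unfolding dipped_grid[OF assms(1)] by (intro ln_mono divide_right_mono) auto
  finally show ?thesis .
qed

lemma plateau_cost_coarse_scale:
  assumes "y \<in> plateau" "1 \<le> k" "real k \<le> y" "y < real k + 1"
    and "1 / real (grid_size k) \<le> r" "a \<le> y" "y \<le> a + r"
  shows "\<exists>z\<in>{a..a+r}. 1 / std_normal_density y \<le> ln (f_nat y / f_nat z)"
proof -
  obtain z where z: "z \<in> grid" "a \<le> z" "z \<le> a + r" "real k \<le> z"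
    using grid_meets_interval[OF assms(2,3) _ assms(6,7,5)] assms(4) by fastforce
  have "f_nat y / f_nat z = dipped y / dipped z"
    unfolding f_nat_def using integral_dipped_pos by simp
  then have "1 / std_normal_density y \<le> ln (f_nat y / f_nat z)"
    using inverse_std_normal_le_ln_dip_ratio[OF z(1) assms(1)] z(4) assms(4) by simp
  then show ?thesis using z(2,3) by auto
qed

lemma plateau_cost_fine_scale:
  assumes "1 \<le> y" "y < real k + 1" "0 < r" "r < 1 / real (grid_size k)"
  shows "1 / std_normal_density y \<le> log_plus (1 / r)"
proof -
  have "y\<^sup>2 \<le> (real k + 1)\<^sup>2" using assms(1,2) by (intro power_mono) auto
  then have "1 / std_normal_density y \<le> 3 * exp ((real k + 1)\<^sup>2)"
    using inverse_std_normal_density_le[of y] exp_le_cancel_iff[of "y\<^sup>2" "(real k + 1)\<^sup>2"]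
    by linarith
  also have "\<dots> \<le> ln (real (grid_size k))"
    using grid_size_bounds(1)[of k] ln_ge_iff[OF grid_size_pos] by blast
  also have "\<dots> \<le> ln (1 / r)"
    using assms(3,4) grid_size_pos[of k] by (intro ln_mono) (auto simp: field_simps)
  also have "\<dots> \<le> log_plus (1 / r)" using assms(3) by (simp add: ln_le_log_plus)
  finally show ?thesis .
qed

lemma f_nat_local_cost_dominates:
  "local_cost_dominates f_nat (\<lambda>y. indicator plateau y / std_normal_density y)"
  unfolding local_cost_dominates_def
proof (intro allI impI)
  fix y a r :: real
  assume "0 < r" "a \<le> y" "y \<le> a + r"
  show "indicator plateau y / std_normal_density y \<le> log_plus (1 / r)
    \<or> (\<exists>z\<in>{a..a+r}. indicator plateau y / std_normal_density y \<le> ln (f_nat y / f_nat z))"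
  proof (cases "y \<in> plateau")
    case False
    then show ?thesis by (simp add: log_plus_nonneg)
  next
    case True
    define k where "k = nat \<lfloor>y\<rfloor>"
    have "1 \<le> y" using True by (simp add: plateau_def)
    then have "1 \<le> k" "real k \<le> y" "y < real k + 1"
      unfolding k_def by linarith+
    then show ?thesis
      using plateau_cost_coarse_scale[OF True] plateau_cost_fine_scale[OF \<open>1 \<le> y\<close>] \<open>0 < r\<close>
        \<open>a \<le> y\<close> \<open>y \<le> a + r\<close> True
      by (cases "1 / real (grid_size k) \<le> r") auto
  qed
qed

section \<open>The plateau has infinite measure\<close>

lemma near_grid_point:
  assumes "real k \<le> y" "y \<le> real k + 1" "g \<in> grid" "dist y g < \<eta>"
  shows "\<exists>i\<le>grid_size k. dist y (real k + real i / real (grid_size k)) < \<eta>"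
proof -
  have N: "0 < real (grid_size k)" by (rule grid_size_pos)
  consider "g \<le> real k" | "real k + 1 \<le> g" | "real k < g" "g < real k + 1" by linarith
  then show ?thesis
  proof cases
    case 1
    then have "dist y (real k + real 0 / real (grid_size k)) < \<eta>"
      using assms by (simp add: dist_real_def)
    then show ?thesis by blast
  next
    case 2
    then have "dist y (real k + real (grid_size k) / real (grid_size k)) < \<eta>"
      using assms N by (simp add: dist_real_def)
    then show ?thesis by blast
  next
    case 3
    obtain k' i where g: "g = real k' + real i / real (grid_size k')" "i \<le> grid_size k'"
      using assms(3) unfolding grid_def by blast
    have "0 \<le> real i / real (grid_size k')" "real i / real (grid_size k') \<le> 1"
      using g(2) grid_size_pos[of k'] by simp_all
    with g(1) 3 have "real k' < real k + 1" "real k < real k' + 1" by linarith+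
    then have "k' = k" by linarith
    then show ?thesis using g assms(4) by blast
  qed
qed

lemma off_plateau_subset_balls:
  assumes "1 \<le> k"
  shows "{real k..real k + 1} - plateau
    \<subseteq> (\<Union>i\<le>grid_size k. ball (real k + real i / real (grid_size k)) (1 / (4 * real (grid_size k) + 4)))"
proof
  fix y assume y: "y \<in> {real k..real k + 1} - plateau"
  define N where "N = real (grid_size k)"
  have "4 * N + 4 \<le> dip_slope y"
  proof -
    have "(real k + 1)\<^sup>2 \<le> (y + 1)\<^sup>2" using y by (intro power_mono) auto
    then have "exp (3 * exp ((real k + 1)\<^sup>2)) \<le> exp (3 * exp ((y + 1)\<^sup>2))" by simp
    then show ?thesis
      using grid_size_bounds(2)[of k] unfolding dip_slope_def N_def by linarith
  qed
  moreover have "dip_slope y * infdist y grid < 1" using y assms by (auto simp: plateau_def)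
  ultimately have "(4 * N + 4) * infdist y grid < 1"
    using mult_right_mono[of "4 * N + 4" "dip_slope y" "infdist y grid"] infdist_nonneg[of y grid]
    by linarith
  moreover have "0 < N" unfolding N_def by (rule grid_size_pos)
  ultimately have "infdist y grid < 1 / (4 * N + 4)" by (simp add: field_simps)
  moreover have "real 1 + real 0 / real (grid_size 1) \<in> grid" unfolding grid_def by blast
  then have "grid \<noteq> {}" by blast
  ultimately obtain g where "g \<in> grid" "dist y g < 1 / (4 * N + 4)"
    using cInf_lessD[of "dist y ` grid"] by (auto simp: infdist_notempty)
  with near_grid_point[of k y g] y obtain i where
    "i \<le> grid_size k" "dist y (real k + real i / N) < 1 / (4 * N + 4)"
    unfolding N_def by auto
  then show "y \<in> (\<Union>i\<le>grid_size k. ball (real k + real i / real (grid_size k))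
      (1 / (4 * real (grid_size k) + 4)))"
    unfolding N_def by (auto simp: dist_commute)
qed

lemma emeasure_off_plateau_le:
  assumes "1 \<le> k"
  shows "emeasure lborel ({real k..real k + 1} - plateau) \<le> ennreal (1 / 2)"
proof -
  define N where "N = grid_size k"
  define \<eta> where "\<eta> = 1 / (4 * real N + 4)"
  have "0 < \<eta>" unfolding \<eta>_def by simp
  have "emeasure lborel ({real k..real k + 1} - plateau)
      \<le> emeasure lborel (\<Union>i\<le>N. ball (real k + real i / real N) \<eta>)"
    using off_plateau_subset_balls[OF assms] unfolding N_def \<eta>_def by (intro emeasure_mono) auto
  also have "\<dots> \<le> (\<Sum>i\<le>N. emeasure lborel (ball (real k + real i / real N) \<eta>))"
    by (intro emeasure_subadditive_finite) auto
  also have "\<dots> = (\<Sum>i\<le>N. ennreal (2 * \<eta>))"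
    using \<open>0 < \<eta>\<close> by (intro sum.cong) (auto simp: ball_eq_greaterThanLessThan)
  also have "\<dots> = ennreal (real (N + 1) * (2 * \<eta>))"
    using \<open>0 < \<eta>\<close> by (simp add: ennreal_mult ennreal_of_nat_eq_real_of_nat)
  also have "real (N + 1) * (2 * \<eta>) = 1 / 2" unfolding \<eta>_def by (simp add: field_simps)
  finally show ?thesis .
qed

lemma plateau_borel[measurable]: "plateau \<in> sets borel"
proof -
  have [measurable]: "(\<lambda>y. dip_slope y * infdist y grid) \<in> borel_measurable borel"
    unfolding dip_slope_def by (intro borel_measurable_continuous_onI continuous_intros)
  show ?thesis unfolding plateau_def by measurable
qed

lemma emeasure_plateau_unit_interval:
  assumes "1 \<le> k"
  shows "ennreal (1 / 2) \<le> emeasure lborel (plateau \<inter> {real k..<real k + 1})"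
proof -
  have "ennreal (1 / 2) + ennreal (1 / 2) = ennreal 1" by (subst ennreal_plus[symmetric]) auto
  also have "\<dots> = emeasure lborel {real k..<real k + 1}" by simp
  also have "\<dots> \<le> emeasure lborel ((plateau \<inter> {real k..<real k + 1}) \<union> ({real k..real k + 1} - plateau))"
    by (intro emeasure_mono) auto
  also have "\<dots> \<le> emeasure lborel (plateau \<inter> {real k..<real k + 1})
      + emeasure lborel ({real k..real k + 1} - plateau)"
    by (intro emeasure_subadditive) auto
  also have "\<dots> \<le> emeasure lborel (plateau \<inter> {real k..<real k + 1}) + ennreal (1 / 2)"
    using emeasure_off_plateau_le[OF assms] by (rule add_left_mono)
  finally show ?thesis by (simp add: add.commute ennreal_add_left_cancel_le)
qed

lemma emeasure_plateau: "emeasure lborel plateau = \<infinity>"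
proof -
  define S where "S k = plateau \<inter> {real (Suc k)..<real (Suc k) + 1}" for k
  have "\<lfloor>x\<rfloor> = int k + 1" if "x \<in> S k" for x k
    using that by (simp add: S_def floor_eq_iff)
  then have "disjoint_family S"
    unfolding disjoint_family_on_def by (metis disjoint_iff add_right_cancel of_nat_eq_iff)
  have "ennreal (1 / 2) \<le> emeasure lborel (S k)" for k
    unfolding S_def by (rule emeasure_plateau_unit_interval) simp
  then have "(\<Sum>k. ennreal (1 / 2)) \<le> (\<Sum>k. emeasure lborel (S k))"
    by (intro suminf_le) auto
  also have "\<dots> = emeasure lborel (\<Union>k. S k)"
    by (rule suminf_emeasure[OF _ \<open>disjoint_family S\<close>]) (auto simp: S_def)
  also have "\<dots> \<le> emeasure lborel plateau"
    by (intro emeasure_mono) (auto simp: S_def)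
  finally show ?thesis
    using summable_iff_suminf_neq_top[of "\<lambda>_. 1 / 2"] by (simp add: summable_const_iff top_unique)
qed

lemma nn_integral_f_nat_plateau_weight:
  "(\<integral>\<^sup>+ y. ennreal (f_nat y * (indicator plateau y / std_normal_density y)) \<partial>lebesgue) = \<infinity>"
proof -
  define c where "c = 1 / integral\<^sup>L lborel dipped"
  have "c \<le> f_nat y * (indicator plateau y / std_normal_density y)" if "y \<in> plateau" for y
  proof -
    have "1 \<le> dipped y / std_normal_density y"
      using dipped_plateau[OF that] std_normal_density_pos[of y] by simp
    then have "c * 1 \<le> c * (dipped y / std_normal_density y)"
      using integral_dipped_pos by (intro mult_left_mono) (simp_all add: c_def)
    also have "\<dots> = f_nat y * (indicator plateau y / std_normal_density y)"
      using that by (simp add: c_def f_nat_def)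
    finally show ?thesis by simp
  qed
  then have "(\<integral>\<^sup>+ y. ennreal c * indicator plateau y \<partial>lebesgue)
      \<le> (\<integral>\<^sup>+ y. ennreal (f_nat y * (indicator plateau y / std_normal_density y)) \<partial>lebesgue)"
    by (intro nn_integral_mono) (simp add: ennreal_leI split: split_indicator)
  moreover have "(\<integral>\<^sup>+ y. ennreal c * indicator plateau y \<partial>lebesgue) = \<infinity>"
    using emeasure_plateau integral_dipped_pos
    by (simp add: c_def nn_integral_completion nn_integral_cmult_indicator ennreal_mult_top)
  ultimately show ?thesis by (simp add: top_unique)
qed

lemma f_nat_not_in_F_CSSA: "f_nat \<notin> F_CSSA"
proof
  have "(\<lambda>y. indicator plateau y / std_normal_density y) \<in> borel_measurable lebesgue"
    by (rule measurable_completion) simp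
  moreover assume "f_nat \<in> F_CSSA"
  ultimately have "(\<integral>\<^sup>+ y. ennreal (f_nat y * (indicator plateau y / std_normal_density y)) \<partial>lebesgue) < \<infinity>"
    using F_CSSA_cost_integrable f_nat_local_cost_dominates by blast
  then show False using nn_integral_f_nat_plateau_weight by simp
qed

theorem mainTheorem16:
  shows "\<exists>f :: real \<Rightarrow> real. f \<in> F_Ent
           \<and> (\<integral>\<^sup>+ x. ennreal (x\<^sup>2 * f x) \<partial>lborel) < \<infinity>
           \<and> f \<notin> F_CSSA"
  using f_nat_in_F_Ent f_nat_second_moment f_nat_not_in_F_CSSA by blast

end
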